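(* For $n\ge 2$ let $G_n$ be the intersection graph of the $\binom{n}{2}$ closed intervals $[i,j]$, $1\le i<j\le n$. Then $c(G_n)\le p(G_n)\le \log n+1$, where $\log$ is base $2$.
   Context: A comparability graph is a graph admitting a transitive orientation. $p(G)$ is the minimum number $m$ such that $E(G)$ is the union of the edge sets of $m$ pairwise edge-disjoint comparability subgraphs of $G$; $c(G)$ is the minimum number of comparability subgraphs of $G$ (not necessarily edge-disjoint) whose edge sets cover $E(G)$. *)

theory Defs
  imports Complex_Main
begin

definition simple_graph :: "'a set \<Rightarrow> 'a set set \<Rightarrow> bool" where
  "simple_graph V E \<longleftrightarrow> (\<forall>e\<in>E. \<exists>u v. u \<noteq> v \<and> u \<in> V \<and> v \<in> V \<and> e = {u, v})"

definition transitive_orientation :: "'a set \<Rightarrow> 'a set set \<Rightarrow> ('a \<times> 'a) set \<Rightarrow> bool" where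
  "transitive_orientation V E R \<longleftrightarrow>
     R \<subseteq> V \<times> V \<and>
     (\<forall>u v. {u, v} \<in> E \<and> u \<noteq> v \<longleftrightarrow> (u, v) \<in> R \<or> (v, u) \<in> R) \<and>
     (\<forall>u v. (u, v) \<in> R \<longrightarrow> (v, u) \<notin> R) \<and>
     trans R"

definition comparability_graph :: "'a set \<Rightarrow> 'a set set \<Rightarrow> bool" where
  "comparability_graph V E \<longleftrightarrow> simple_graph V E \<and> (\<exists>R. transitive_orientation V E R)"

definition subgraph :: "'a set \<Rightarrow> 'a set set \<Rightarrow> 'a set \<Rightarrow> 'a set set \<Rightarrow> bool" where
  "subgraph W F V E \<longleftrightarrow> W \<subseteq> V \<and> F \<subseteq> E \<and> simple_graph W F"

definition p_num :: "'a set \<Rightarrow> 'a set set \<Rightarrow> nat" where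
  "p_num V E = (LEAST m. \<exists>W F. (\<forall>i<m. subgraph (W i) (F i) V E \<and> comparability_graph (W i) (F i))
        \<and> (\<Union>i<m. F i) = E \<and> (\<forall>i<m. \<forall>j<m. i \<noteq> j \<longrightarrow> F i \<inter> F j = {}))"

definition c_num :: "'a set \<Rightarrow> 'a set set \<Rightarrow> nat" where
  "c_num V E = (LEAST m. \<exists>W F. (\<forall>i<m. subgraph (W i) (F i) V E \<and> comparability_graph (W i) (F i))
        \<and> (\<Union>i<m. F i) = E)"

definition Gn_vertices :: "nat \<Rightarrow> (nat \<times> nat) set" where
  "Gn_vertices n = {(i, j). 1 \<le> i \<and> i < j \<and> j \<le> n}"

definition Gn_edges :: "nat \<Rightarrow> (nat \<times> nat) set set" where
  "Gn_edges n = {{a, b} | a b. a \<in> Gn_vertices n \<and> b \<in> Gn_vertices n \<and> a \<noteq> b \<and>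
       {real (fst a)..real (snd a)} \<inter> {real (fst b)..real (snd b)} \<noteq> {}}"

end

theory Submission
  imports Defs "HOL-Library.Log_Nat"
begin

text \<open>Give the edge between the intervals a and b the level k at which the dyadic blocks
  of size 2^k containing their endpoints first coincide, i.e. the position of the leading
  binary digit in which the endpoint pairs differ. All endpoints are below 2^L for
  L = floorlog 2 n, so L levels partition the edges. Along a path a, b, c inside one level,
  all left endpoints share their binary prefix P above bit k and all right endpoints share a
  prefix Q, and ranking the digit pairs at bit k as (1,0) < (0,0) < (1,1) < (0,1) orients
  the level transitively: if P < Q any two of its intervals overlap, and if P = Q its only
  edges join (0,1) to (0,0) or (1,1), so the maximal rank of (0,1) leaves no directed path
  of length two.\<close>

definition comparability_cover ::
    "'a set \<Rightarrow> 'a set set \<Rightarrow> nat \<Rightarrow> (nat \<Rightarrow> 'a set) \<Rightarrow> (nat \<Rightarrow> 'a set set) \<Rightarrow> bool" where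
  "comparability_cover V E m W F \<longleftrightarrow>
     (\<forall>i<m. subgraph (W i) (F i) V E \<and> comparability_graph (W i) (F i)) \<and> (\<Union>i<m. F i) = E"

definition comparability_partition ::
    "'a set \<Rightarrow> 'a set set \<Rightarrow> nat \<Rightarrow> (nat \<Rightarrow> 'a set) \<Rightarrow> (nat \<Rightarrow> 'a set set) \<Rightarrow> bool" where
  "comparability_partition V E m W F \<longleftrightarrow>
     comparability_cover V E m W F \<and> (\<forall>i<m. \<forall>j<m. i \<noteq> j \<longrightarrow> F i \<inter> F j = {})"

lemma p_num_eq: "p_num V E = (LEAST m. \<exists>W F. comparability_partition V E m W F)"
  unfolding p_num_def comparability_partition_def comparability_cover_def by simp

lemma c_num_eq: "c_num V E = (LEAST m. \<exists>W F. comparability_cover V E m W F)"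
  unfolding c_num_def comparability_cover_def by simp

lemma p_num_le: "comparability_partition V E m W F \<Longrightarrow> p_num V E \<le> m"
  unfolding p_num_eq by (blast intro: Least_le)

lemma c_num_le_p_num:
  assumes "comparability_partition V E m W F"
  shows "c_num V E \<le> p_num V E"
proof -
  have "\<exists>W F. comparability_partition V E (p_num V E) W F"
    unfolding p_num_eq by (rule LeastI_ex) (use assms in blast)
  then have "\<exists>W F. comparability_cover V E (p_num V E) W F"
    unfolding comparability_partition_def by blast
  then show ?thesis
    unfolding c_num_eq by (rule Least_le)
qed

lemma atLeastAtMost_overlap_iff:
  fixes a b c d :: "'a :: linorder"
  shows "{a..b} \<inter> {c..d} \<noteq> {} \<longleftrightarrow> a \<le> b \<and> c \<le> d \<and> a \<le> d \<and> c \<le> b"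
  by auto

lemma nat_interval_overlap_iff:
  "{real i..real j} \<inter> {real i'..real j'} \<noteq> {} \<longleftrightarrow> i \<le> j \<and> i' \<le> j' \<and> i \<le> j' \<and> i' \<le> j"
  by (simp only: atLeastAtMost_overlap_iff of_nat_le_iff)

lemma Gn_edge_iff:
  "{a, b} \<in> Gn_edges n \<longleftrightarrow>
     a \<in> Gn_vertices n \<and> b \<in> Gn_vertices n \<and> a \<noteq> b \<and> fst a \<le> snd b \<and> fst b \<le> snd a"
proof
  assume "{a, b} \<in> Gn_edges n"
  then obtain a' b' where "{a, b} = {a', b'}" "a' \<in> Gn_vertices n" "b' \<in> Gn_vertices n" "a' \<noteq> b'"
      "fst a' \<le> snd b'" "fst b' \<le> snd a'"
    unfolding Gn_edges_def nat_interval_overlap_iff by blast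
  then show "a \<in> Gn_vertices n \<and> b \<in> Gn_vertices n \<and> a \<noteq> b \<and> fst a \<le> snd b \<and> fst b \<le> snd a"
    by (auto simp: doubleton_eq_iff)
next
  assume "a \<in> Gn_vertices n \<and> b \<in> Gn_vertices n \<and> a \<noteq> b \<and> fst a \<le> snd b \<and> fst b \<le> snd a"
  moreover then have "fst a \<le> snd a" "fst b \<le> snd b"
    unfolding Gn_vertices_def by auto
  ultimately show "{a, b} \<in> Gn_edges n"
    unfolding Gn_edges_def nat_interval_overlap_iff by blast
qed

lemma Gn_edgeE:
  assumes "e \<in> Gn_edges n"
  obtains a b where "e = {a, b}"
  using assms unfolding Gn_edges_def by blast

lemma Gn_vertex_le: "a \<in> Gn_vertices n \<Longrightarrow> fst a \<le> snd a"
  unfolding Gn_vertices_def by auto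

lemma simple_graph_Gn: "simple_graph (Gn_vertices n) (Gn_edges n)"
  unfolding simple_graph_def Gn_edges_def by blast

definition dyadic_block :: "nat \<Rightarrow> nat \<times> nat \<Rightarrow> nat \<times> nat" where
  "dyadic_block k a = (fst a div 2 ^ k, snd a div 2 ^ k)"

definition digit_pair :: "nat \<Rightarrow> nat \<times> nat \<Rightarrow> nat \<times> nat" where
  "digit_pair k a = (fst a div 2 ^ k mod 2, snd a div 2 ^ k mod 2)"

definition split_level :: "nat \<Rightarrow> nat \<times> nat \<Rightarrow> nat \<times> nat \<Rightarrow> bool" where
  "split_level k a b \<longleftrightarrow>
     dyadic_block k a \<noteq> dyadic_block k b \<and> dyadic_block (Suc k) a = dyadic_block (Suc k) b"

lemma dyadic_block_0 [simp]: "dyadic_block 0 a = a"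
  by (simp add: dyadic_block_def)

lemma dyadic_block_decompose:
  "dyadic_block k a = (2 * fst (dyadic_block (Suc k) a) + fst (digit_pair k a),
                       2 * snd (dyadic_block (Suc k) a) + snd (digit_pair k a))"
  unfolding dyadic_block_def digit_pair_def by (simp add: power_Suc2 div_mult2_eq del: power_Suc)

lemma dyadic_block_eq_iff_Suc:
  "dyadic_block k a = dyadic_block k b \<longleftrightarrow>
     dyadic_block (Suc k) a = dyadic_block (Suc k) b \<and> digit_pair k a = digit_pair k b"
proof
  assume "dyadic_block k a = dyadic_block k b"
  then show "dyadic_block (Suc k) a = dyadic_block (Suc k) b \<and> digit_pair k a = digit_pair k b"
    unfolding dyadic_block_def digit_pair_def by (simp add: power_Suc2 div_mult2_eq del: power_Suc)
next
  assume "dyadic_block (Suc k) a = dyadic_block (Suc k) b \<and> digit_pair k a = digit_pair k b"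
  then show "dyadic_block k a = dyadic_block k b"
    by (subst (1 2) dyadic_block_decompose) simp
qed

lemma dyadic_block_eq_mono:
  assumes "dyadic_block k a = dyadic_block k b" and "k \<le> k'"
  shows "dyadic_block k' a = dyadic_block k' b"
  using assms(2)
proof (induction k' rule: dec_induct)
  case base
  then show ?case using assms(1) .
next
  case (step m)
  then show ?case using dyadic_block_eq_iff_Suc by blast
qed

lemma digit_pair_bits: "digit_pair k a \<in> {0, 1} \<times> {0, 1}"
  unfolding digit_pair_def by auto

lemma split_level_digit_pair: "split_level k a b \<Longrightarrow> digit_pair k a \<noteq> digit_pair k b"
  unfolding split_level_def using dyadic_block_eq_iff_Suc by blast

lemma split_level_commute: "split_level k a b \<longleftrightarrow> split_level k b a"
  unfolding split_level_def by auto

lemma split_level_exists: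
  "a \<noteq> b \<Longrightarrow> dyadic_block L a = dyadic_block L b \<Longrightarrow> \<exists>k<L. split_level k a b"
proof (induction L)
  case 0
  then show ?case by simp
next
  case (Suc L)
  then show ?case
    unfolding split_level_def
    by (cases "dyadic_block L a = dyadic_block L b") (auto intro: less_SucI)
qed

lemma split_level_unique:
  assumes "split_level k a b" and "split_level k' a b"
  shows "k = k'"
proof (rule ccontr)
  assume "k \<noteq> k'"
  then consider "Suc k \<le> k'" | "Suc k' \<le> k" by linarith
  then show False
    using assms dyadic_block_eq_mono[of "Suc k" a b k'] dyadic_block_eq_mono[of "Suc k'" a b k]
    unfolding split_level_def by cases auto
qed

lemma dyadic_block_Gn_vertex:
  "a \<in> Gn_vertices n \<Longrightarrow> n < 2 ^ L \<Longrightarrow> dyadic_block L a = (0, 0)"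
  unfolding Gn_vertices_def dyadic_block_def by auto

lemma dyadic_block_fst_le_snd: "fst a \<le> snd b \<Longrightarrow> fst (dyadic_block k a) \<le> snd (dyadic_block k b)"
  unfolding dyadic_block_def by (simp add: div_le_mono)

lemma dyadic_block_fst_less_sndD:
  "fst (dyadic_block k a) < snd (dyadic_block k b) \<Longrightarrow> fst a < snd b"
  unfolding dyadic_block_def fst_conv snd_conv by (meson div_le_mono not_le)

definition digit_rank :: "nat \<times> nat \<Rightarrow> nat" where
  "digit_rank d = 2 * snd d + 1 - fst d"

lemma bit_pair_cases:
  assumes "d \<in> {0, 1} \<times> {0, 1}"
  obtains "d = (0, 0)" | "d = (0, 1)" | "d = (1, 0)" | "d = (1, 1)"
  using assms by fastforce

lemma digit_rank_inj_bits:
  "d \<in> {0, 1} \<times> {0, 1} \<Longrightarrow> d' \<in> {0, 1} \<times> {0, 1} \<Longrightarrow> digit_rank d = digit_rank d' \<Longrightarrow> d = d'"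
  by (elim bit_pair_cases) (simp_all add: digit_rank_def)

lemma split_level_digit_rank:
  "split_level k a b \<Longrightarrow> digit_rank (digit_pair k a) \<noteq> digit_rank (digit_pair k b)"
  using split_level_digit_pair digit_rank_inj_bits digit_pair_bits by blast

lemma digit_rank_path_overlap:
  fixes P Q :: nat
  assumes bits: "da \<in> {0, 1} \<times> {0, 1}" "db \<in> {0, 1} \<times> {0, 1}" "dc \<in> {0, 1} \<times> {0, 1}"
    and intervals: "2 * P + fst da \<le> 2 * Q + snd da" "2 * P + fst db \<le> 2 * Q + snd db"
    and overlap: "2 * P + fst da \<le> 2 * Q + snd db" "2 * P + fst db \<le> 2 * Q + snd da"
    and rank: "digit_rank da < digit_rank db" "digit_rank db < digit_rank dc"
  shows "2 * P + fst da < 2 * Q + snd dc \<and> 2 * P + fst dc < 2 * Q + snd da"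
proof -
  have "fst da \<le> 1" "fst dc \<le> 1" "fst db \<le> 1" "snd da \<le> 1" "snd db \<le> 1" "snd dc \<le> 1"
    using bits by auto
  then consider "P < Q" | "P = Q"
    using intervals by linarith
  then show ?thesis
  proof cases
    case 1
    with \<open>fst da \<le> 1\<close> \<open>fst dc \<le> 1\<close> show ?thesis by linarith
  next
    case 2
    from bits(1,2) have False
      using intervals overlap rank \<open>snd dc \<le> 1\<close> unfolding 2 digit_rank_def
      by (elim bit_pair_cases) auto
    then show ?thesis ..
  qed
qed

definition level_edges :: "nat \<Rightarrow> nat \<Rightarrow> (nat \<times> nat) set set" where
  "level_edges n k = {e \<in> Gn_edges n. \<exists>a b. e = {a, b} \<and> split_level k a b}"

definition level_orientation :: "nat \<Rightarrow> nat \<Rightarrow> ((nat \<times> nat) \<times> (nat \<times> nat)) set" where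
  "level_orientation n k = {(a, b). {a, b} \<in> Gn_edges n \<and> split_level k a b \<and>
                                    digit_rank (digit_pair k a) < digit_rank (digit_pair k b)}"

lemma level_edges_iff: "{a, b} \<in> level_edges n k \<longleftrightarrow> {a, b} \<in> Gn_edges n \<and> split_level k a b"
proof
  assume "{a, b} \<in> level_edges n k"
  then obtain a' b' where "{a, b} \<in> Gn_edges n" "{a, b} = {a', b'}" "split_level k a' b'"
    unfolding level_edges_def by blast
  then show "{a, b} \<in> Gn_edges n \<and> split_level k a b"
    unfolding doubleton_eq_iff using split_level_commute by blast
qed (unfold level_edges_def, blast)

lemma trans_level_orientation: "trans (level_orientation n k)"
proof (rule transI)
  fix a b c
  assume "(a, b) \<in> level_orientation n k" and "(b, c) \<in> level_orientation n k"
  then have ab: "{a, b} \<in> Gn_edges n" "split_level k a b"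
      and bc: "{b, c} \<in> Gn_edges n" "split_level k b c"
      and rank: "digit_rank (digit_pair k a) < digit_rank (digit_pair k b)"
                "digit_rank (digit_pair k b) < digit_rank (digit_pair k c)"
    unfolding level_orientation_def by auto
  obtain P Q where "dyadic_block (Suc k) b = (P, Q)"
    by fastforce
  moreover have "dyadic_block (Suc k) a = dyadic_block (Suc k) b"
      "dyadic_block (Suc k) c = dyadic_block (Suc k) b"
    using ab(2) bc(2) unfolding split_level_def by auto
  ultimately have block:
      "dyadic_block k x = (2 * P + fst (digit_pair k x), 2 * Q + snd (digit_pair k x))" if "x = a \<or> x = b \<or> x = c" for x
    using that dyadic_block_decompose[of k x] by auto
  have "fst a \<le> snd a" "fst b \<le> snd b" "fst a \<le> snd b" "fst b \<le> snd a"
    using ab(1) Gn_edge_iff Gn_vertex_le by blast+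
  then have "fst (dyadic_block k a) \<le> snd (dyadic_block k a)"
      "fst (dyadic_block k b) \<le> snd (dyadic_block k b)"
      "fst (dyadic_block k a) \<le> snd (dyadic_block k b)"
      "fst (dyadic_block k b) \<le> snd (dyadic_block k a)"
    by (simp_all add: dyadic_block_fst_le_snd)
  then have "fst (dyadic_block k a) < snd (dyadic_block k c) \<and>
             fst (dyadic_block k c) < snd (dyadic_block k a)"
    using digit_rank_path_overlap[OF digit_pair_bits digit_pair_bits digit_pair_bits _ _ _ _ rank]
    by (simp add: block)
  then have "fst a < snd c" "fst c < snd a"
    using dyadic_block_fst_less_sndD by blast+
  moreover have "a \<noteq> c"
    using rank by auto
  moreover have "split_level k a c"
    using rank ab(2) bc(2) dyadic_block_eq_iff_Suc[of k a c] unfolding split_level_def by auto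
  ultimately show "(a, c) \<in> level_orientation n k"
    using ab(1) bc(1) rank unfolding level_orientation_def Gn_edge_iff by auto
qed

lemma comparability_level_graph: "comparability_graph (Gn_vertices n) (level_edges n k)"
  unfolding comparability_graph_def
proof
  show "simple_graph (Gn_vertices n) (level_edges n k)"
    using simple_graph_Gn unfolding simple_graph_def level_edges_def by blast
  have "{u, v} \<in> level_edges n k \<and> u \<noteq> v \<longleftrightarrow>
          (u, v) \<in> level_orientation n k \<or> (v, u) \<in> level_orientation n k" for u v
    using split_level_digit_rank[of k u v]
    unfolding level_edges_iff level_orientation_def
    by (auto simp: insert_commute split_level_commute)
  then show "\<exists>R. transitive_orientation (Gn_vertices n) (level_edges n k) R"
    unfolding transitive_orientation_def using trans_level_orientation
    by (intro exI[of _ "level_orientation n k"]) (auto simp: level_orientation_def Gn_edge_iff)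
qed

lemma Gn_level_partition:
  assumes "n < 2 ^ L"
  shows "comparability_partition (Gn_vertices n) (Gn_edges n) L (\<lambda>_. Gn_vertices n) (level_edges n)"
  unfolding comparability_partition_def comparability_cover_def
proof (intro conjI allI impI)
  show "subgraph (Gn_vertices n) (level_edges n i) (Gn_vertices n) (Gn_edges n)" for i
    using comparability_level_graph unfolding subgraph_def comparability_graph_def level_edges_def
    by auto
  show "comparability_graph (Gn_vertices n) (level_edges n i)" for i
    by (rule comparability_level_graph)
  show "(\<Union>i<L. level_edges n i) = Gn_edges n"
  proof
    show "Gn_edges n \<subseteq> (\<Union>i<L. level_edges n i)"
    proof
      fix e assume e: "e \<in> Gn_edges n"
      then obtain a b where ab: "e = {a, b}" by (rule Gn_edgeE)
      with e have "a \<noteq> b" "dyadic_block L a = dyadic_block L b"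
        using dyadic_block_Gn_vertex[OF _ assms] by (auto simp: Gn_edge_iff)
      then obtain k where "k < L" "split_level k a b"
        using split_level_exists by blast
      then show "e \<in> (\<Union>i<L. level_edges n i)"
        using e ab unfolding level_edges_def by blast
    qed
  qed (auto simp: level_edges_def)
  show "level_edges n i \<inter> level_edges n j = {}" if "i \<noteq> j" for i j
    using that split_level_unique unfolding level_edges_def
    by (auto simp: doubleton_eq_iff split_level_commute)
qed

theorem theorem8:
  fixes n :: nat
  assumes "n \<ge> 2"
  shows "c_num (Gn_vertices n) (Gn_edges n) \<le> p_num (Gn_vertices n) (Gn_edges n)
     \<and> real (p_num (Gn_vertices n) (Gn_edges n)) \<le> log 2 (real n) + 1"
proof -
  define L where "L = floorlog 2 n"
  have "n < 2 ^ L"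
    unfolding L_def using floorlog_bounds[of n 2] assms by simp
  then have partition:
    "comparability_partition (Gn_vertices n) (Gn_edges n) L (\<lambda>_. Gn_vertices n) (level_edges n)"
    by (rule Gn_level_partition)
  have "real L \<le> log 2 (real n) + 1"
    unfolding L_def floorlog_def using assms by simp
  with p_num_le[OF partition] c_num_le_p_num[OF partition] show ?thesis
    by (meson of_nat_le_iff order_trans)
qed

end
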